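(* Let $d\ge2$ be an integer and $N_1,\dots,N_d$ positive integers. Let $X\subseteq[N_1]\times\cdots\times[N_d]$, and let $\mathbf{b}=(b_1,\dots,b_d)\in\mathbb{Z}^d\setminus\{\mathbf{0}\}$ with $\lambda=\lambda(\mathbf{b}):=\max_{1\le i\le d}\frac{|b_i|}{\gcd(b_1,\dots,b_d)N_i}\le1$. Let $s^*\le s\le\min_iN_i$ be positive integers. Suppose $f_{\mathbf{b}}:\mathbb{Z}^d\to\mathbb{Z}^{d-1}$ is a map of the form $f_{\mathbf{b}}(\mathbf{x})=M\mathbf{x}+\mathbf{v}$ ($M\in\mathbb{Z}^{(d-1)\times d}$, $\mathbf{v}\in\mathbb{Z}^{d-1}$) such that for all $\mathbf{x}_1,\mathbf{x}_2\in\mathbb{Z}^d$, $f_{\mathbf{b}}(\mathbf{x}_1)=f_{\mathbf{b}}(\mathbf{x}_2)$ iff $\mathbf{x}_1-\mathbf{x}_2=k\mathbf{b}$ for some $k\in\mathbb{Q}$, and let $\mathbf{b}'\in\mathbb{Z}^d$ satisfy $f_{\mathbf{b}}(\mathbf{b}')\ne f_{\mathbf{b}}(\mathbf{0})$. Then \[ |U^d(X,\mathbf{b},s)\cap U^d(X,\mathbf{b}',s)|\le\frac{s^*-1}{s}|U^d(X,\mathbf{b}',s)|+\frac2\lambda\big|U^{d-1}\big(f_{\mathbf{b}}(U^d(X,\mathbf{b},s)),\,f_{\mathbf{b}}(\mathbf{b}')-f_{\mathbf{b}}(\mathbf{0}),\,s^*\big)\big|. \]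
   Context: $[N]=\{1,\dots,N\}$. For $n\ge1$, a finite set $Y\subseteq\mathbb{Z}^n$, $\mathbf{c}\in\mathbb{Z}^n\setminus\{\mathbf{0}\}$ and a positive integer $r$: points $\mathbf{y},\mathbf{y}'$ are congruent mod $\mathbf{c}$ if $\mathbf{y}-\mathbf{y}'\in\mathbb{Z}\mathbf{c}$, and $U^n(Y,\mathbf{c},r)$ is the set of $\mathbf{y}\in Y$ with $|\{\mathbf{y}'\in Y:\mathbf{y}'\equiv\mathbf{y}\pmod{\mathbf{c}}\}|\ge r$. (If $\mathbf{b}'=\mathbf{0}$ is allowed by the hypothesis it cannot occur, since then $f_{\mathbf{b}}(\mathbf{b}')=f_{\mathbf{b}}(\mathbf{0})$.) *)

theory Defs
  imports Complex_Main
begin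

text \<open>Points of Z^n are represented as functions nat => int; only the
components with index < n are meaningful (we require the others to be 0 where
relevant). Coordinate i (0-based) corresponds to coordinate i+1 of the paper.\<close>

definition zvec :: "nat \<Rightarrow> (nat \<Rightarrow> int) \<Rightarrow> bool" where
  "zvec n x \<longleftrightarrow> (\<forall>i\<ge>n. x i = 0)"

definition cong_vec :: "nat \<Rightarrow> (nat \<Rightarrow> int) \<Rightarrow> (nat \<Rightarrow> int) \<Rightarrow> (nat \<Rightarrow> int) \<Rightarrow> bool" where
  "cong_vec n c y y' \<longleftrightarrow> (\<exists>k::int. \<forall>i<n. y i - y' i = k * c i)"

definition U :: "nat \<Rightarrow> (nat \<Rightarrow> int) set \<Rightarrow> (nat \<Rightarrow> int) \<Rightarrow> nat \<Rightarrow> (nat \<Rightarrow> int) set" where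
  "U n Y c r = {y \<in> Y. r \<le> card {y' \<in> Y. cong_vec n c y' y}}"

definition affine_map :: "nat \<Rightarrow> (nat \<Rightarrow> nat \<Rightarrow> int) \<Rightarrow> (nat \<Rightarrow> int) \<Rightarrow> (nat \<Rightarrow> int) \<Rightarrow> (nat \<Rightarrow> int)" where
  "affine_map d M v x = (\<lambda>j. if j < d - 1 then (\<Sum>i<d. M j i * x i) + v j else 0)"

definition lam :: "nat \<Rightarrow> (nat \<Rightarrow> nat) \<Rightarrow> (nat \<Rightarrow> int) \<Rightarrow> real" where
  "lam d N b = Max ((\<lambda>i. \<bar>real_of_int (b i)\<bar> / (real_of_int (Gcd (b ` {..<d})) * real (N i))) ` {..<d})"

end

theory Submission
  imports Defs
begin

text \<open>Split the points y of U(X,b,s) \<inter> U(X,b',s) according to how many points of U(X,b,s)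
lie in the b'-class of y. If fewer than s', double counting over the b'-classes of X, each of
size at least s since they meet U(X,b',s), gives the first term. Otherwise, since f_b identifies
only points differing by a rational multiple of b while f_b(b') \<noteq> f_b(0), it is injective on
b'-classes, and being affine it maps b'-classes into classes modulo f_b(b') - f_b(0); so f_b(y)
lies in U^(d-1)(f_b(U(X,b,s)), f_b(b') - f_b(0), s'). Finally, a fibre of f_b inside the box lies
on a line of direction b/gcd(b), whose steps in a coordinate i maximising |b_i|/(gcd(b) N_i) are
lambda N_i; so the fibre has at most (N_i - 1)/(lambda N_i) + 1 \<le> 2/lambda points.\<close>

lemma cong_vec_sym: "cong_vec n c y y' \<Longrightarrow> cong_vec n c y' y"
  unfolding cong_vec_def by (metis minus_diff_eq mult_minus_left)

lemma cong_vec_trans: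
  assumes "cong_vec n c x y" "cong_vec n c y z"
  shows "cong_vec n c x z"
proof -
  obtain k1 k2 where k1: "\<forall>i<n. x i - y i = k1 * c i" and k2: "\<forall>i<n. y i - z i = k2 * c i"
    using assms unfolding cong_vec_def by blast
  have "x i - z i = (k1 + k2) * c i" if "i < n" for i
    using k1[rule_format, OF that] k2[rule_format, OF that] by (smt (verit) distrib_right)
  then have "\<forall>i<n. x i - z i = (k1 + k2) * c i" by blast
  then show ?thesis unfolding cong_vec_def by blast
qed

lemma cong_vec_class_eq:
  assumes "cong_vec n c z y"
  shows "{y' \<in> Y. cong_vec n c y' z} = {y' \<in> Y. cong_vec n c y' y}"
  using cong_vec_trans[OF _ assms] cong_vec_trans[OF _ cong_vec_sym[OF assms]] by blast

lemma finite_box: "finite {x. zvec d x \<and> (\<forall>i<d. 1 \<le> x i \<and> x i \<le> int (N i))}"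
proof (rule finite_subset)
  show "finite {x. \<forall>i. (i \<in> {..<d} \<longrightarrow> x i \<in> (\<Union>j<d. {1..int (N j)})) \<and> (i \<notin> {..<d} \<longrightarrow> x i = 0)}"
    by (intro finite_set_of_finite_funs) auto
qed (auto simp: zvec_def)

lemma double_counting_card_le:
  fixes R :: "'a \<Rightarrow> 'a \<Rightarrow> bool"
  assumes "finite X" "P \<subseteq> B" "B \<subseteq> X"
    and "\<forall>y\<in>P. s \<le> card {z \<in> X. R z y}"
    and "\<forall>z\<in>X. \<forall>y\<in>P. R z y \<longrightarrow> z \<in> B"
    and "\<forall>z\<in>B. card {y \<in> P. R z y} \<le> m"
  shows "card P * s \<le> card B * m"
proof -
  have fin: "finite B" "finite P"
    using finite_subset[OF assms(3,1)] finite_subset[OF assms(2)] by auto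
  have "card P * s = (\<Sum>y\<in>P. s)" by simp
  also have "\<dots> \<le> (\<Sum>y\<in>P. card {z \<in> X. R z y})"
    using assms(4) by (intro sum_mono) auto
  also have "\<dots> = (\<Sum>y\<in>P. \<Sum>z\<in>X. if R z y then 1 else 0)"
    using assms(1) by (intro sum.cong refl) (simp add: sum.inter_filter[symmetric])
  also have "\<dots> = (\<Sum>z\<in>X. \<Sum>y\<in>P. if R z y then 1 else 0)" by (rule sum.swap)
  also have "\<dots> = (\<Sum>z\<in>X. card {y \<in> P. R z y})"
    using fin by (intro sum.cong refl) (simp add: sum.inter_filter[symmetric])
  also have "\<dots> = (\<Sum>z\<in>B. card {y \<in> P. R z y})"
  proof (rule sum.mono_neutral_right[OF assms(1,3)])
    show "\<forall>z\<in>X - B. card {y \<in> P. R z y} = 0" using assms(5) fin(2) by auto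
  qed
  also have "\<dots> \<le> (\<Sum>z\<in>B. m)"
    using assms(6) by (intro sum_mono) auto
  also have "\<dots> = card B * m" by simp
  finally show ?thesis .
qed

lemma card_sparse_part_le:
  assumes "finite X" "A \<subseteq> X"
  shows "card {y \<in> A \<inter> U n X c s. card {y' \<in> A. cong_vec n c y' y} < r} * s
           \<le> card (U n X c s) * (r - 1)"
  (is "card ?P * s \<le> card ?B * (r - 1)")
proof (rule double_counting_card_le[OF assms(1), where R = "cong_vec n c"])
  show "\<forall>y\<in>?P. s \<le> card {z \<in> X. cong_vec n c z y}"
    unfolding U_def by blast
  show "\<forall>z\<in>X. \<forall>y\<in>?P. cong_vec n c z y \<longrightarrow> z \<in> ?B"
  proof (intro ballI impI)
    fix z y assume "z \<in> X" "y \<in> ?P" "cong_vec n c z y"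
    then have "s \<le> card {y' \<in> X. cong_vec n c y' z}"
      unfolding U_def cong_vec_class_eq[OF \<open>cong_vec n c z y\<close>] by simp
    then show "z \<in> ?B" using \<open>z \<in> X\<close> unfolding U_def by simp
  qed
  show "\<forall>z\<in>?B. card {y \<in> ?P. cong_vec n c z y} \<le> r - 1"
  proof
    fix z
    show "card {y \<in> ?P. cong_vec n c z y} \<le> r - 1"
    proof (cases "\<exists>y\<in>?P. cong_vec n c z y")
      case True
      then obtain y where y: "y \<in> ?P" "cong_vec n c z y" by blast
      have "{y \<in> ?P. cong_vec n c z y} \<subseteq> {y' \<in> A. cong_vec n c y' y}"
        using cong_vec_trans[OF cong_vec_sym y(2)] by auto
      moreover have "finite {y' \<in> A. cong_vec n c y' y}"
        using assms by (auto intro: finite_subset)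
      ultimately have "card {y \<in> ?P. cong_vec n c z y} \<le> card {y' \<in> A. cong_vec n c y' y}"
        by (rule card_mono[rotated])
      moreover have "card {y' \<in> A. cong_vec n c y' y} < r" using y(1) by blast
      ultimately show ?thesis by linarith
    next
      case False
      then have "{y \<in> ?P. cong_vec n c z y} = {}" by auto
      then show ?thesis by (simp only: card.empty)
    qed
  qed
qed (use assms in \<open>auto simp: U_def\<close>)

lemma dense_part_subset_preimage_U:
  assumes "finite A"
    and inj: "\<forall>y1\<in>A. \<forall>y2\<in>A. cong_vec n c y1 y2 \<longrightarrow> f y1 = f y2 \<longrightarrow> y1 = y2"
    and cong: "\<forall>y1 y2. cong_vec n c y1 y2 \<longrightarrow> cong_vec m c' (f y1) (f y2)"
  shows "{y \<in> A. r \<le> card {y' \<in> A. cong_vec n c y' y}} \<subseteq> {y \<in> A. f y \<in> U m (f ` A) c' r}"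
proof clarify
  fix y assume y: "y \<in> A" "r \<le> card {y' \<in> A. cong_vec n c y' y}"
  have "inj_on f {y' \<in> A. cong_vec n c y' y}"
  proof (rule inj_onI)
    fix y1 y2 assume "y1 \<in> {y' \<in> A. cong_vec n c y' y}" "y2 \<in> {y' \<in> A. cong_vec n c y' y}" "f y1 = f y2"
    then show "y1 = y2" using inj cong_vec_trans[OF _ cong_vec_sym, of n c y1 y y2] by simp
  qed
  then have "card {y' \<in> A. cong_vec n c y' y} = card (f ` {y' \<in> A. cong_vec n c y' y})"
    by (simp add: card_image)
  also have "\<dots> \<le> card {w \<in> f ` A. cong_vec m c' w (f y)}"
    using assms(1) cong by (intro card_mono) auto
  finally show "f y \<in> U m (f ` A) c' r" using y unfolding U_def by auto
qed

lemma card_preimage_le: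
  fixes m :: real
  assumes "finite W" "\<forall>w\<in>W. real (card {y \<in> A. f y = w}) \<le> m"
  shows "real (card {y \<in> A. f y \<in> W}) \<le> real (card W) * m"
proof -
  have "{y \<in> A. f y \<in> W} = (\<Union>w\<in>W. {y \<in> A. f y = w})" by blast
  then have "card {y \<in> A. f y \<in> W} \<le> (\<Sum>w\<in>W. card {y \<in> A. f y = w})"
    using card_UN_le[OF assms(1)] by simp
  then have "real (card {y \<in> A. f y \<in> W}) \<le> real (\<Sum>w\<in>W. card {y \<in> A. f y = w})"
    by (simp only: of_nat_le_iff)
  also have "\<dots> = (\<Sum>w\<in>W. real (card {y \<in> A. f y = w}))" by simp
  also have "\<dots> \<le> (\<Sum>w\<in>W. m)"
    using assms(2) by (intro sum_mono) auto
  also have "\<dots> = real (card W) * m" by simp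
  finally show ?thesis .
qed

lemma card_inter_U_le:
  fixes f :: "(nat \<Rightarrow> int) \<Rightarrow> (nat \<Rightarrow> int)" and m :: real
  assumes "finite X" "A \<subseteq> X" "0 < r" "0 < s"
    and inj: "\<forall>y1\<in>A. \<forall>y2\<in>A. cong_vec n c y1 y2 \<longrightarrow> f y1 = f y2 \<longrightarrow> y1 = y2"
    and cong: "\<forall>y1 y2. cong_vec n c y1 y2 \<longrightarrow> cong_vec n' c' (f y1) (f y2)"
    and fibre: "\<forall>w. real (card {y \<in> A. f y = w}) \<le> m"
  shows "real (card (A \<inter> U n X c s))
           \<le> (real r - 1) / real s * real (card (U n X c s)) + m * real (card (U n' (f ` A) c' r))"
proof -
  define B W where "B = U n X c s" and "W = U n' (f ` A) c' r"
  define sparse where "sparse = {y \<in> A \<inter> B. card {y' \<in> A. cong_vec n c y' y} < r}"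
  define dense where "dense = {y \<in> A. r \<le> card {y' \<in> A. cong_vec n c y' y}}"
  have "finite A" using assms(1,2) by (rule finite_subset[rotated])
  have "A \<inter> B \<subseteq> sparse \<union> dense" unfolding sparse_def dense_def by auto
  moreover have "finite (sparse \<union> dense)"
    using \<open>finite A\<close> unfolding sparse_def dense_def by simp
  ultimately have "card (A \<inter> B) \<le> card (sparse \<union> dense)" by (rule card_mono[rotated])
  also have "\<dots> \<le> card sparse + card dense" by (rule card_Un_le)
  finally have split: "card (A \<inter> B) \<le> card sparse + card dense" .
  have "card sparse * s \<le> card B * (r - 1)"
    using card_sparse_part_le[OF assms(1,2)] unfolding sparse_def B_def .
  then have "real (card sparse * s) \<le> real (card B * (r - 1))" by (simp only: of_nat_le_iff)
  then have "real (card sparse) * real s \<le> real (card B) * (real r - 1)"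
    using assms(3) by (simp add: of_nat_diff)
  then have sparse_le: "real (card sparse) \<le> (real r - 1) / real s * real (card B)"
    using assms(4) by (simp add: field_simps)
  have "dense \<subseteq> {y \<in> A. f y \<in> W}"
    unfolding dense_def W_def by (rule dense_part_subset_preimage_U[OF \<open>finite A\<close> inj cong])
  then have "real (card dense) \<le> real (card {y \<in> A. f y \<in> W})"
    using \<open>finite A\<close> by (simp add: card_mono)
  also have "\<dots> \<le> real (card W) * m"
    using fibre \<open>finite A\<close> unfolding W_def U_def by (intro card_preimage_le) auto
  finally show ?thesis using split sparse_le unfolding B_def W_def by (simp add: mult.commute)
qed

lemma cong_vec_affine_map:
  assumes "cong_vec d c y' y"
  shows "cong_vec (d - 1) (\<lambda>j. affine_map d M v c j - affine_map d M v (\<lambda>_. 0) j)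
           (affine_map d M v y') (affine_map d M v y)"
proof -
  obtain k where k: "\<forall>i<d. y' i - y i = k * c i" using assms unfolding cong_vec_def by blast
  have "affine_map d M v y' j - affine_map d M v y j
          = k * (affine_map d M v c j - affine_map d M v (\<lambda>_. 0) j)" if "j < d - 1" for j
  proof -
    have "affine_map d M v y' j - affine_map d M v y j = (\<Sum>i<d. M j i * (y' i - y i))"
      using that by (simp add: affine_map_def sum_subtractf right_diff_distrib)
    also have "\<dots> = (\<Sum>i<d. k * (M j i * c i))" using k by (intro sum.cong) auto
    finally show ?thesis using that by (simp add: affine_map_def sum_distrib_left)
  qed
  then show ?thesis unfolding cong_vec_def by blast
qed

lemma inj_on_cong_vec_classes:
  fixes \<phi> :: "(nat \<Rightarrow> int) \<Rightarrow> 'a"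
  assumes \<phi>: "\<forall>x1 x2. \<phi> x1 = \<phi> x2 \<longleftrightarrow> (\<exists>q::rat. \<forall>i<d. of_int (x1 i - x2 i) = q * of_int (b i))"
    and b': "\<phi> b' \<noteq> \<phi> (\<lambda>_. 0)"
    and A: "\<forall>y\<in>A. zvec d y"
  shows "\<forall>y1\<in>A. \<forall>y2\<in>A. cong_vec d b' y1 y2 \<longrightarrow> \<phi> y1 = \<phi> y2 \<longrightarrow> y1 = y2"
proof (intro ballI impI)
  fix y1 y2 assume y: "y1 \<in> A" "y2 \<in> A" "cong_vec d b' y1 y2" "\<phi> y1 = \<phi> y2"
  obtain k where k: "\<forall>i<d. y1 i - y2 i = k * b' i" using y(3) unfolding cong_vec_def by blast
  obtain q :: rat where q: "\<forall>i<d. of_int (y1 i - y2 i) = q * of_int (b i)" using \<phi> y(4) by blast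
  have "k = 0"
  proof (rule ccontr)
    assume "k \<noteq> 0"
    then have "\<forall>i<d. of_int (b' i - 0) = q / of_int k * (of_int (b i) :: rat)"
      using k q by (auto simp: field_simps)
    then show False using \<phi> b' by blast
  qed
  moreover have "zvec d y1" "zvec d y2" using A y(1,2) by auto
  ultimately show "y1 = y2" using k unfolding zvec_def by (auto simp: fun_eq_iff) (metis not_less)
qed

lemma rat_multiple_imp_int_multiple:
  fixes x b :: "nat \<Rightarrow> int" and q :: rat
  assumes "\<forall>i<d. of_int (x i) = q * of_int (b i)"
  obtains k where "\<forall>i<d. x i = k * (b i div Gcd (b ` {..<d}))"
proof -
  define g where "g = Gcd (b ` {..<d})"
  obtain r t where rt: "quotient_of q = (r, t)" by (cases "quotient_of q") auto
  have t: "t > 0" "coprime r t" using quotient_of_denom_pos[OF rt] quotient_of_coprime[OF rt] by auto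
  have xt: "x i * t = r * b i" if "i < d" for i
  proof -
    have "of_int (x i) = of_int r / of_int t * (of_int (b i) :: rat)"
      using assms that quotient_of_div[OF rt] by simp
    then have "of_int (x i * t) = (of_int (r * b i) :: rat)" using t by (simp add: field_simps)
    then show ?thesis by (simp only: of_int_eq_iff)
  qed
  have "t dvd b i" if "i < d" for i
    using xt[OF that] t(2) by (metis coprime_commute coprime_dvd_mult_right_iff dvd_triv_right)
  then have "t dvd g" unfolding g_def by (auto intro: Gcd_greatest)
  then obtain e where e: "g = t * e" by blast
  have "x i = (r * e) * (b i div g)" if "i < d" for i
  proof -
    have "b i = g * (b i div g)" unfolding g_def using that by simp
    then have "x i * t = r * (g * (b i div g))" using xt[OF that] by metis
    then have "x i * t = (r * e * (b i div g)) * t" using e by (simp add: ac_simps)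
    then show ?thesis using t by simp
  qed
  then show ?thesis using that unfolding g_def by blast
qed

lemma lam_attained:
  assumes "\<forall>i<d. N i > 0" "\<exists>i<d. b i \<noteq> 0"
  obtains i where "i < d" "b i \<noteq> 0"
    "lam d N b = \<bar>real_of_int (b i div Gcd (b ` {..<d}))\<bar> / real (N i)"
proof -
  define g where "g = Gcd (b ` {..<d})"
  define h where "h i = \<bar>real_of_int (b i)\<bar> / (real_of_int g * real (N i))" for i
  have lam: "lam d N b = Max (h ` {..<d})" unfolding lam_def h_def g_def ..
  obtain j where j: "j < d" "b j \<noteq> 0" using assms(2) by blast
  then have "g \<noteq> 0" unfolding g_def by auto
  then have "g > 0" unfolding g_def using Gcd_int_greater_eq_0 by (simp add: order_less_le)
  have "Max (h ` {..<d}) \<in> h ` {..<d}" using j(1) by (intro Max_in) auto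
  then obtain i where i: "i < d" "lam d N b = h i" unfolding lam by auto
  have "0 < h j" unfolding h_def using j \<open>g > 0\<close> assms(1) by simp
  also have "h j \<le> lam d N b" unfolding lam using j(1) by (auto intro: Max_ge)
  finally have "b i \<noteq> 0" using i(2) unfolding h_def by auto
  moreover have "b i = g * (b i div g)" unfolding g_def using i(1) by simp
  then have "\<bar>real_of_int (b i)\<bar> = real_of_int g * \<bar>real_of_int (b i div g)\<bar>"
    using \<open>g > 0\<close> by (metis abs_mult abs_of_pos of_int_abs of_int_mult)
  then have "h i = \<bar>real_of_int (b i div g)\<bar> / real (N i)"
    unfolding h_def using \<open>g > 0\<close> by simp
  ultimately show ?thesis using that i unfolding g_def by auto
qed

lemma card_progression_in_interval_le:
  fixes K :: "int set" and a m lo hi :: int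
  assumes "finite K" "K \<noteq> {}" "\<forall>k\<in>K. lo \<le> a + k * m \<and> a + k * m \<le> hi"
  shows "int (card K) * \<bar>m\<bar> \<le> hi - lo + \<bar>m\<bar>"
proof -
  define k0 k1 where "k0 = Min K" and "k1 = Max K"
  have k01: "k0 \<in> K" "k1 \<in> K" "K \<subseteq> {k0..k1}"
    using assms(1,2) unfolding k0_def k1_def by auto
  then have "k0 \<le> k1" by auto
  then have "int (card K) \<le> k1 - k0 + 1"
    using card_mono[OF finite_atLeastAtMost_int k01(3)] by (simp add: le_nat_iff)
  then have "int (card K) * \<bar>m\<bar> \<le> (k1 - k0) * \<bar>m\<bar> + \<bar>m\<bar>"
    using mult_right_mono[of _ _ "\<bar>m\<bar>"] by (fastforce simp: distrib_right)
  moreover have "(k1 - k0) * \<bar>m\<bar> \<le> hi - lo"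
  proof -
    have "(k1 - k0) * \<bar>m\<bar> = \<bar>(a + k1 * m) - (a + k0 * m)\<bar>"
      using \<open>k0 \<le> k1\<close> by (simp add: abs_mult flip: left_diff_distrib)
    moreover have "lo \<le> a + k0 * m" "a + k0 * m \<le> hi" "lo \<le> a + k1 * m" "a + k1 * m \<le> hi"
      using assms(3) k01(1,2) by auto
    ultimately show ?thesis by linarith
  qed
  ultimately show ?thesis by linarith
qed

lemma card_collinear_in_interval_le:
  assumes "finite F" "F \<noteq> {}" "i < d" "\<beta> i \<noteq> 0"
    and "\<forall>y\<in>F. zvec d y \<and> lo \<le> y i \<and> y i \<le> hi"
    and "\<forall>y\<in>F. \<exists>k. \<forall>j<d. y j - y0 j = k * \<beta> j"
  shows "int (card F) * \<bar>\<beta> i\<bar> \<le> hi - lo + \<bar>\<beta> i\<bar>"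
proof -
  obtain kf where kf: "\<forall>y\<in>F. \<forall>j<d. y j - y0 j = kf y * \<beta> j"
    using bchoice[OF assms(6)] by blast
  have "inj_on kf F"
  proof (rule inj_onI)
    fix y y' assume "y \<in> F" "y' \<in> F" "kf y = kf y'"
    then have "\<forall>j<d. y j - y0 j = y' j - y0 j" using kf by simp
    then have "\<forall>j<d. y j = y' j" by simp
    moreover have "zvec d y" "zvec d y'" using assms(5) \<open>y \<in> F\<close> \<open>y' \<in> F\<close> by auto
    then have "\<forall>j\<ge>d. y j = y' j" unfolding zvec_def by simp
    ultimately show "y = y'" by (metis not_less ext)
  qed
  then have "card F = card (kf ` F)" by (simp add: card_image)
  moreover have "\<forall>k\<in>kf ` F. lo \<le> y0 i + k * \<beta> i \<and> y0 i + k * \<beta> i \<le> hi"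
    using kf assms(3,5) by force
  ultimately show ?thesis
    using card_progression_in_interval_le[of "kf ` F"] assms(1,2) by simp
qed

lemma card_rat_collinear_in_box_le:
  assumes N: "\<forall>i<d. N i > 0" and b: "\<exists>i<d. b i \<noteq> 0" and lam: "lam d N b \<le> 1"
    and F: "\<forall>y\<in>F. zvec d y \<and> (\<forall>i<d. 1 \<le> y i \<and> y i \<le> int (N i))"
    and collinear: "\<forall>y1\<in>F. \<forall>y2\<in>F. \<exists>q::rat. \<forall>i<d. of_int (y1 i - y2 i) = q * of_int (b i)"
  shows "real (card F) \<le> 2 / lam d N b"
proof -
  define \<beta> where "\<beta> j = b j div Gcd (b ` {..<d})" for j
  obtain i where i: "i < d" "b i \<noteq> 0" and lam_eq: "lam d N b = \<bar>real_of_int (\<beta> i)\<bar> / real (N i)"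
    using lam_attained[OF N b] unfolding \<beta>_def by blast
  have "\<beta> i \<noteq> 0" using i unfolding \<beta>_def by (simp add: dvd_div_eq_0_iff)
  have "N i > 0" using N i(1) by blast
  then have \<beta>_le: "\<bar>\<beta> i\<bar> \<le> int (N i)" using lam unfolding lam_eq by (simp add: divide_le_eq)
  show ?thesis
  proof (cases "F = {}")
    case True
    then show ?thesis unfolding lam_eq by simp
  next
    case False
    then obtain y0 where "y0 \<in> F" by blast
    have "finite F" by (rule finite_subset[OF _ finite_box[of d N]]) (use F in auto)
    have "\<forall>y\<in>F. \<exists>k. \<forall>j<d. y j - y0 j = k * \<beta> j"
    proof
      fix y assume "y \<in> F"
      then obtain q :: rat where "\<forall>j<d. of_int (y j - y0 j) = q * of_int (b j)"
        using collinear \<open>y0 \<in> F\<close> by blast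
      then obtain k where "\<forall>j<d. y j - y0 j = k * \<beta> j"
        unfolding \<beta>_def by (rule rat_multiple_imp_int_multiple)
      then show "\<exists>k. \<forall>j<d. y j - y0 j = k * \<beta> j" by blast
    qed
    then have "int (card F) * \<bar>\<beta> i\<bar> \<le> int (N i) - 1 + \<bar>\<beta> i\<bar>"
      using card_collinear_in_interval_le[of F i d \<beta> 1 "int (N i)" y0] \<open>finite F\<close> False i(1) \<open>\<beta> i \<noteq> 0\<close> F
      by auto
    then have "int (card F) * \<bar>\<beta> i\<bar> \<le> 2 * int (N i)" using \<beta>_le by linarith
    then have "real_of_int (int (card F) * \<bar>\<beta> i\<bar>) \<le> real_of_int (2 * int (N i))"
      by (simp only: of_int_le_iff)
    then have "real (card F) * \<bar>real_of_int (\<beta> i)\<bar> \<le> 2 * real (N i)" by simp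
    then show ?thesis unfolding lam_eq using \<open>\<beta> i \<noteq> 0\<close> \<open>N i > 0\<close> by (simp add: field_simps)
  qed
qed

theorem lemma4p8:
  fixes d :: nat and N :: "nat \<Rightarrow> nat" and X :: "(nat \<Rightarrow> int) set"
    and b b' :: "nat \<Rightarrow> int" and s s' :: nat
    and M :: "nat \<Rightarrow> nat \<Rightarrow> int" and v :: "nat \<Rightarrow> int"
  assumes d: "d \<ge> 2"
    and N: "\<forall>i<d. N i > 0"
    and X: "\<forall>x\<in>X. zvec d x \<and> (\<forall>i<d. 1 \<le> x i \<and> x i \<le> int (N i))"
    and b: "zvec d b" "\<exists>i<d. b i \<noteq> 0"
    and lam: "lam d N b \<le> 1"
    and s: "0 < s'" "s' \<le> s" "\<forall>i<d. s \<le> N i"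
    and v: "zvec (d - 1) v"
    and f: "\<forall>x1 x2. affine_map d M v x1 = affine_map d M v x2 \<longleftrightarrow>
              (\<exists>k::rat. \<forall>i<d. of_int (x1 i - x2 i) = k * of_int (b i))"
    and b': "zvec d b'" "affine_map d M v b' \<noteq> affine_map d M v (\<lambda>_. 0)"
  shows "real (card (U d X b s \<inter> U d X b' s))
    \<le> (real s' - 1) / real s * real (card (U d X b' s))
      + 2 / lam d N b * real (card (U (d - 1) (affine_map d M v ` U d X b s)
           (\<lambda>j. affine_map d M v b' j - affine_map d M v (\<lambda>_. 0) j) s'))"
proof -
  have "finite X" by (rule finite_subset[OF _ finite_box[of d N]]) (use X in auto)
  have A: "U d X b s \<subseteq> X" unfolding U_def by auto
  then have "\<forall>y\<in>U d X b s. zvec d y" using X by blast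
  note inj = inj_on_cong_vec_classes[OF f b'(2) this]
  have fibre: "\<forall>w. real (card {y \<in> U d X b s. affine_map d M v y = w}) \<le> 2 / lam d N b"
  proof
    fix w
    show "real (card {y \<in> U d X b s. affine_map d M v y = w}) \<le> 2 / lam d N b"
    proof (rule card_rat_collinear_in_box_le[OF N b(2) lam])
      show "\<forall>y\<in>{y \<in> U d X b s. affine_map d M v y = w}. zvec d y \<and> (\<forall>i<d. 1 \<le> y i \<and> y i \<le> int (N i))"
        using X A by auto
      show "\<forall>y1\<in>{y \<in> U d X b s. affine_map d M v y = w}. \<forall>y2\<in>{y \<in> U d X b s. affine_map d M v y = w}.
              \<exists>q::rat. \<forall>i<d. of_int (y1 i - y2 i) = q * of_int (b i)"
        using f by (metis (mono_tags, lifting) mem_Collect_eq)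
    qed
  qed
  have cong: "\<forall>y1 y2. cong_vec d b' y1 y2 \<longrightarrow> cong_vec (d - 1)
      (\<lambda>j. affine_map d M v b' j - affine_map d M v (\<lambda>_. 0) j) (affine_map d M v y1) (affine_map d M v y2)"
    by (intro allI impI) (rule cong_vec_affine_map)
  have "0 < s" using s(1,2) by simp
  from card_inter_U_le[OF \<open>finite X\<close> A s(1) this inj cong fibre] show ?thesis
    by (simp add: mult.commute)
qed

end
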